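(* Let $G=(V,E)$ be a finite simple graph with $V\neq\emptyset$ and let $w:V\to\mathbb{N}^+$ be a weight function on its vertices. Let $W=w[V]$ and $K=\alpha_w(G)$. Then $$\tilde{w}[E]\ \ge\ \frac{W^2}{K}-W .$$
   Context: For a function $f$ on a set $T$, $f[T]=\sum_{t\in T}f(t)$. For a set $F$ of edges of $G$, $\tilde{w}[F]=\sum_{uv\in F}\big(w(u)+w(v)\big)$. $\alpha_w(G)$ is the maximum of $w[I]$ over all independent sets $I\subseteq V$. *)

theory Defs
  imports Main Complex_Main
begin

definition simple_graph :: "'a set \<Rightarrow> 'a set set \<Rightarrow> bool" where
  "simple_graph V E \<longleftrightarrow> finite V \<and> (\<forall>e\<in>E. e \<subseteq> V \<and> card e = 2)"

definition independent_set :: "'a set \<Rightarrow> 'a set set \<Rightarrow> 'a set \<Rightarrow> bool" where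
  "independent_set V E I \<longleftrightarrow> I \<subseteq> V \<and> (\<forall>u\<in>I. \<forall>v\<in>I. {u, v} \<notin> E)"

definition alpha_w :: "'a set \<Rightarrow> 'a set set \<Rightarrow> ('a \<Rightarrow> nat) \<Rightarrow> nat" where
  "alpha_w V E w = Max {sum w I | I. independent_set V E I}"

text \<open>tilde-w[F] = sum over edges uv in F of w(u)+w(v).\<close>
definition edge_weight :: "('a \<Rightarrow> nat) \<Rightarrow> 'a set set \<Rightarrow> nat" where
  "edge_weight w F = (\<Sum>e\<in>F. sum w e)"

end

theory Submission
  imports Defs "HOL-Analysis.Convex"
begin

text \<open>The weighted Caro--Wei bound gives \<open>K \<ge> \<Sum>v. w(v) / (d(v) + 1)\<close>, where \<open>d\<close> is the degree.
  By Cauchy--Schwarz, \<open>W\<^sup>2 \<le> (\<Sum>v. w(v) / (d(v) + 1)) \<cdot> (\<Sum>v. w(v) (d(v) + 1))\<close>, and the second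
  factor is \<open>w~[E] + W\<close> because every edge \<open>uv\<close> contributes \<open>w(u) + w(v)\<close> to it exactly once.
  The Caro--Wei bound itself follows by greedily picking a vertex \<open>v\<close> whose closed neighbourhood
  carries at most \<open>w(v)\<close> of the bound, and recursing on the rest of the graph.\<close>

definition neighbours :: "'a set \<Rightarrow> 'a set set \<Rightarrow> 'a \<Rightarrow> 'a set" where
  "neighbours V E u = {x \<in> V. {u, x} \<in> E}"

definition caro_wei_bound :: "'a set \<Rightarrow> 'a set set \<Rightarrow> ('a \<Rightarrow> nat) \<Rightarrow> 'a set \<Rightarrow> real" where
  "caro_wei_bound V E w S =
     (\<Sum>u\<in>S. real (w u) / real (card (neighbours V E u \<inter> S) + 1))"

lemma neighbours_subset: "neighbours V E u \<subseteq> V"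
  by (auto simp: neighbours_def)

lemma neighbours_sym: "x \<in> neighbours V E u \<Longrightarrow> u \<in> V \<Longrightarrow> u \<in> neighbours V E x"
  by (auto simp: neighbours_def insert_commute)

lemma not_in_neighbours:
  assumes "simple_graph V E"
  shows "u \<notin> neighbours V E u"
proof
  assume "u \<in> neighbours V E u"
  then have "{u} \<in> E" by (simp add: neighbours_def)
  with assms show False by (auto simp: simple_graph_def)
qed

lemma card_neighbours_eq_degree:
  assumes "simple_graph V E"
  shows "card (neighbours V E u) = card {e \<in> E. u \<in> e}"
proof -
  have "bij_betw (\<lambda>x. {u, x}) (neighbours V E u) {e \<in> E. u \<in> e}"
  proof (rule bij_betwI')
    fix e assume e: "e \<in> {e \<in> E. u \<in> e}"
    with assms have "card e = 2" "e \<subseteq> V" by (auto simp: simple_graph_def)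
    with e obtain x where "e = {u, x}"
      by (metis card_2_iff insert_commute insert_iff singletonD mem_Collect_eq)
    with e \<open>e \<subseteq> V\<close> show "\<exists>x\<in>neighbours V E u. e = {u, x}"
      by (auto simp: neighbours_def)
  qed (auto simp: neighbours_def doubleton_eq_iff)
  then show ?thesis by (rule bij_betw_same_card)
qed

text \<open>Double counting along the symmetric neighbourhood relation.\<close>
lemma sum_over_closed_neighbourhoods:
  fixes g :: "'a \<Rightarrow> real"
  assumes "finite S" "S \<subseteq> V"
  shows "(\<Sum>v\<in>S. \<Sum>u\<in>insert v (neighbours V E v) \<inter> S. g u)
           = (\<Sum>u\<in>S. g u * real (card (insert u (neighbours V E u) \<inter> S)))"
proof -
  have "(\<Sum>v\<in>S. \<Sum>u\<in>insert v (neighbours V E v) \<inter> S. g u)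
          = (\<Sum>v\<in>S. \<Sum>u\<in>S. if u \<in> insert v (neighbours V E v) then g u else 0)"
    using assms(1) by (intro sum.cong[OF refl]) (metis Int_commute sum.inter_restrict)
  also have "\<dots> = (\<Sum>u\<in>S. \<Sum>v\<in>S. if u \<in> insert v (neighbours V E v) then g u else 0)"
    by (rule sum.swap)
  also have "\<dots> = (\<Sum>u\<in>S. g u * real (card (insert u (neighbours V E u) \<inter> S)))"
  proof (rule sum.cong[OF refl])
    fix u assume "u \<in> S"
    with assms(2) have "{v \<in> S. u \<in> insert v (neighbours V E v)} = insert u (neighbours V E u) \<inter> S"
      by (auto intro: neighbours_sym)
    then show "(\<Sum>v\<in>S. if u \<in> insert v (neighbours V E v) then g u else 0)
                 = g u * real (card (insert u (neighbours V E u) \<inter> S))"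
      using assms(1) by (simp add: sum.If_cases Int_def)
  qed
  finally show ?thesis .
qed

lemma exists_light_closed_neighbourhood:
  assumes "simple_graph V E" "finite S" "S \<subseteq> V" "S \<noteq> {}"
  obtains v where "v \<in> S"
    "(\<Sum>u\<in>insert v (neighbours V E v) \<inter> S.
        real (w u) / real (card (neighbours V E u \<inter> S) + 1)) \<le> real (w v)"
proof -
  let ?f = "\<lambda>u. real (w u) / real (card (neighbours V E u \<inter> S) + 1)"
  have "card (insert u (neighbours V E u) \<inter> S) = card (neighbours V E u \<inter> S) + 1"
    if "u \<in> S" for u
    using that assms(2) not_in_neighbours[OF assms(1), of u] by simp
  then have total: "(\<Sum>v\<in>S. \<Sum>u\<in>insert v (neighbours V E v) \<inter> S. ?f u) = (\<Sum>v\<in>S. real (w v))"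
    using sum_over_closed_neighbourhoods[OF assms(2,3), of ?f] by simp
  have "\<exists>v\<in>S. (\<Sum>u\<in>insert v (neighbours V E v) \<inter> S. ?f u) \<le> real (w v)"
  proof (rule ccontr)
    assume "\<not> ?thesis"
    then have "(\<Sum>v\<in>S. real (w v)) < (\<Sum>v\<in>S. \<Sum>u\<in>insert v (neighbours V E v) \<inter> S. ?f u)"
      using assms(2,4) by (intro sum_strict_mono) (auto simp: not_le)
    with total show False by simp
  qed
  with that show ?thesis by blast
qed

lemma caro_wei_bound_split:
  assumes "finite S"
  shows "caro_wei_bound V E w S \<le>
           (\<Sum>u\<in>insert v (neighbours V E v) \<inter> S. real (w u) / real (card (neighbours V E u \<inter> S) + 1))
           + caro_wei_bound V E w (S - insert v (neighbours V E v))"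
proof -
  let ?C = "insert v (neighbours V E v)"
  let ?f = "\<lambda>T u. real (w u) / real (card (neighbours V E u \<inter> T) + 1)"
  have "caro_wei_bound V E w S = (\<Sum>u\<in>?C \<inter> S. ?f S u) + (\<Sum>u\<in>S - ?C. ?f S u)"
    unfolding caro_wei_bound_def using assms
    by (subst sum.union_disjoint[symmetric]) (auto intro: sum.cong)
  also have "(\<Sum>u\<in>S - ?C. ?f S u) \<le> (\<Sum>u\<in>S - ?C. ?f (S - ?C) u)"
  proof (rule sum_mono)
    fix u
    have "card (neighbours V E u \<inter> (S - ?C)) \<le> card (neighbours V E u \<inter> S)"
      using assms by (intro card_mono) auto
    then show "?f S u \<le> ?f (S - ?C) u"
      by (intro divide_left_mono) auto
  qed
  finally show ?thesis by (simp add: caro_wei_bound_def)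
qed

lemma independent_set_insert:
  assumes "simple_graph V E" "independent_set V E I" "v \<in> V"
    and "I \<inter> insert v (neighbours V E v) = {}"
  shows "independent_set V E (insert v I)"
  using assms not_in_neighbours[OF assms(1), of v]
  by (auto simp: independent_set_def neighbours_def insert_commute)

theorem weighted_caro_wei:
  assumes "simple_graph V E" "finite S" "S \<subseteq> V"
  obtains I where "I \<subseteq> S" "independent_set V E I" "caro_wei_bound V E w S \<le> real (sum w I)"
  using assms(2,3)
proof (induction S arbitrary: thesis rule: finite_psubset_induct)
  case (psubset S)
  show ?case
  proof (cases "S = {}")
    case True
    then show ?thesis
      by (intro psubset.prems(1)[of "{}"]) (auto simp: independent_set_def caro_wei_bound_def)
  next
    case False
    obtain v where v: "v \<in> S"
      and light: "(\<Sum>u\<in>insert v (neighbours V E v) \<inter> S.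
                     real (w u) / real (card (neighbours V E u \<inter> S) + 1)) \<le> real (w v)"
      using exists_light_closed_neighbourhood[OF assms(1) psubset.hyps(1) psubset.prems(2) False] .
    let ?S' = "S - insert v (neighbours V E v)"
    obtain I where I: "I \<subseteq> ?S'" "independent_set V E I" "caro_wei_bound V E w ?S' \<le> real (sum w I)"
      using psubset.IH[of ?S'] v psubset.prems(2) by blast
    have "finite I" using I(1) psubset.hyps(1) finite_subset by blast
    moreover have "v \<notin> I" using I(1) by blast
    ultimately have "caro_wei_bound V E w S \<le> real (sum w (insert v I))"
      using caro_wei_bound_split[OF psubset.hyps(1), of V E w v] light I(3) by simp
    moreover have "independent_set V E (insert v I)"
      using I v psubset.prems(2) by (intro independent_set_insert[OF assms(1)]) auto
    ultimately show ?thesis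
      using I(1) v by (intro psubset.prems(1)) auto
  qed
qed

lemma sum_le_alpha_w:
  assumes "finite V" "independent_set V E I"
  shows "sum w I \<le> alpha_w V E w"
proof -
  have "{sum w I | I. independent_set V E I} \<subseteq> sum w ` Pow V"
    by (auto simp: independent_set_def)
  then have "finite {sum w I | I. independent_set V E I}"
    using assms(1) finite_subset by blast
  then show ?thesis
    unfolding alpha_w_def using assms(2) by (intro Max_ge) auto
qed

corollary caro_wei_bound_le_alpha_w:
  assumes "simple_graph V E"
  shows "caro_wei_bound V E w V \<le> real (alpha_w V E w)"
proof -
  have "finite V" using assms by (simp add: simple_graph_def)
  then obtain I where "independent_set V E I" "caro_wei_bound V E w V \<le> real (sum w I)"
    using weighted_caro_wei[OF assms] by blast
  with \<open>finite V\<close> show ?thesis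
    using sum_le_alpha_w[OF \<open>finite V\<close> \<open>independent_set V E I\<close>, of w] by linarith
qed

lemma edge_weight_eq_sum_degree:
  assumes "finite V" "\<forall>e\<in>E. e \<subseteq> V"
  shows "edge_weight w E = (\<Sum>v\<in>V. w v * card {e \<in> E. v \<in> e})"
proof -
  have "finite E" using assms finite_subset[of E "Pow V"] by auto
  have "edge_weight w E = (\<Sum>e\<in>E. \<Sum>v\<in>V. if v \<in> e then w v else 0)"
    unfolding edge_weight_def using assms
    by (intro sum.cong[OF refl]) (metis Int_absorb1 sum.inter_restrict)
  also have "\<dots> = (\<Sum>v\<in>V. \<Sum>e\<in>E. if v \<in> e then w v else 0)"
    by (rule sum.swap)
  also have "\<dots> = (\<Sum>v\<in>V. w v * card {e \<in> E. v \<in> e})"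
    using \<open>finite E\<close> by (simp add: sum.If_cases Int_def mult.commute)
  finally show ?thesis .
qed

corollary edge_weight_eq_sum_card_neighbours:
  assumes "simple_graph V E"
  shows "edge_weight w E = (\<Sum>v\<in>V. w v * card (neighbours V E v))"
  using assms unfolding simple_graph_def
  by (simp add: edge_weight_eq_sum_degree card_neighbours_eq_degree[OF assms])

lemma square_sum_le_sum_divide_mult_sum_mult:
  fixes a c :: "'a \<Rightarrow> real"
  assumes "\<forall>u\<in>S. a u \<ge> 0 \<and> c u > 0"
  shows "(\<Sum>u\<in>S. a u)\<^sup>2 \<le> (\<Sum>u\<in>S. a u / c u) * (\<Sum>u\<in>S. a u * c u)"
proof -
  have "sqrt (a u / c u) * sqrt (a u * c u) = a u" "(sqrt (a u / c u))\<^sup>2 = a u / c u"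
       "(sqrt (a u * c u))\<^sup>2 = a u * c u" if "u \<in> S" for u
    using assms that by (auto simp flip: real_sqrt_mult)
  then show ?thesis
    using Cauchy_Schwarz_ineq_sum[of "\<lambda>u. sqrt (a u / c u)" "\<lambda>u. sqrt (a u * c u)" S]
    by (simp cong: sum.cong)
qed

theorem theorem3p1:
  fixes V :: "'a set" and E :: "'a set set" and w :: "'a \<Rightarrow> nat"
  assumes "simple_graph V E" and "V \<noteq> {}" and "\<forall>v\<in>V. w v > 0"
  shows "real (edge_weight w E) \<ge>
           real (sum w V) ^ 2 / real (alpha_w V E w) - real (sum w V)"
proof -
  define d where "d v = real (card (neighbours V E v) + 1)" for v
  define A where "A = caro_wei_bound V E w V"
  define K where "K = real (alpha_w V E w)"
  have finV: "finite V" using assms(1) by (simp add: simple_graph_def)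
  have A: "A = (\<Sum>v\<in>V. real (w v) / d v)"
    unfolding A_def caro_wei_bound_def d_def by (simp add: Int_absorb2 neighbours_subset)
  have "0 < A" unfolding A using assms(2,3) finV by (intro sum_pos) (auto simp: d_def)
  moreover have "A \<le> K" unfolding A_def K_def by (rule caro_wei_bound_le_alpha_w[OF assms(1)])
  moreover have "(\<Sum>v\<in>V. real (w v) * d v) = real (edge_weight w E) + real (sum w V)"
    unfolding edge_weight_eq_sum_card_neighbours[OF assms(1)]
    by (simp add: d_def algebra_simps sum.distrib of_nat_sum)
  moreover have "real (sum w V) ^ 2 \<le> A * (\<Sum>v\<in>V. real (w v) * d v)"
    unfolding A of_nat_sum by (rule square_sum_le_sum_divide_mult_sum_mult) (simp add: d_def)
  ultimately have "real (sum w V) ^ 2 \<le> K * (real (edge_weight w E) + real (sum w V))"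
    by (smt (verit) mult_right_mono of_nat_0_le_iff)
  moreover have "0 < K" using \<open>0 < A\<close> \<open>A \<le> K\<close> by linarith
  ultimately have "real (sum w V) ^ 2 / K \<le> real (edge_weight w E) + real (sum w V)"
    by (simp add: pos_divide_le_eq mult.commute del: of_nat_sum)
  then show ?thesis by (simp add: K_def)
qed

end
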